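(* Let $X=[0,1]$ with the usual metric, $U=\{0,1,2\}$, and let $F_0,F_1,F_2:[0,1]\to[0,1]$ be given by $F_0(x)=x$ for $0\le x<\frac38$, $F_0(x)=5(x-\frac12)+1$ for $\frac38\le x<\frac12$, $F_0(x)=1$ for $\frac12\le x<\frac58$, $F_0(x)=-5(x-\frac34)+\frac38$ for $\frac58\le x<\frac34$, $F_0(x)=\frac38$ for $\frac34\le x\le1$; $F_1(x)=1$ for $0\le x<\frac14$, $F_1(x)=-4(x-\frac14)+1$ for $\frac14\le x<\frac38$, $F_1(x)=\frac12$ for $\frac38\le x<\frac12$, $F_1(x)=4(x-\frac58)+1$ for $\frac12\le x<\frac58$, $F_1(x)=1$ for $\frac58\le x\le1$; and $F_2(x)=1$ for all $x\in[0,1]$. Consider the control system $x_{n+1}=F_{u_n}(x_n)$ and let $Q=[\frac14,\frac12]$. Then $Q$ is equi-invariant in the mean but not equi-invariant.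
   Context: For $\omega=(\omega_0,\omega_1,\dots)\in\mathscr U=U^{\mathbb N_0}$ and $x\in X$: $\phi(0,x,\omega)=x$, $\phi(k,x,\omega)=F_{\omega_{k-1}}\circ\cdots\circ F_{\omega_0}(x)$. $d(y,Q)=\inf_{q\in Q}|y-q|$, $B_\varepsilon(Q)=\{y:d(y,Q)<\varepsilon\}$, $B(x,\delta)$ open ball, $\mathbb N=\{1,2,\dots\}$. A point $x\in Q$ is an equi-invariant point of $Q$ if for every $\varepsilon>0$ there exist $\delta>0$ and $\omega\in\mathscr U$ such that $\phi(k,y,\omega)\in B_\varepsilon(Q)$ for all $k\in\mathbb N_0$ and all $y\in B(x,\delta)\cap Q$. It is an equi-invariant point in the mean of $Q$ if for every $\varepsilon>0$ there exist $\delta>0$ and $\omega\in\mathscr U$ such that $\frac1n\sum_{i=0}^{n-1}d(\phi(i,y,\omega),Q)<\varepsilon$ for all $n\in\mathbb N$ and all $y\in B(x,\delta)\cap Q$. $Q$ is equi-invariant (resp. equi-invariant in the mean) if all its points are. *)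

theory Defs
  imports "HOL-Analysis.Analysis"
begin

fun phi :: "('u \<Rightarrow> 'a \<Rightarrow> 'a) \<Rightarrow> nat \<Rightarrow> 'a \<Rightarrow> (nat \<Rightarrow> 'u) \<Rightarrow> 'a" where
  "phi F 0 x w = x"
| "phi F (Suc k) x w = F (w k) (phi F k x w)"

definition equi_invariant_point ::
  "('u \<Rightarrow> 'a::metric_space \<Rightarrow> 'a) \<Rightarrow> 'u set \<Rightarrow> 'a set \<Rightarrow> 'a \<Rightarrow> bool" where
  "equi_invariant_point F U Q x \<longleftrightarrow> x \<in> Q \<and>
     (\<forall>\<epsilon>>0. \<exists>\<delta>>0. \<exists>w. (\<forall>i. w i \<in> U) \<and>
        (\<forall>k. \<forall>y \<in> ball x \<delta> \<inter> Q. infdist (phi F k y w) Q < \<epsilon>))"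

definition equi_invariant_mean_point ::
  "('u \<Rightarrow> 'a::metric_space \<Rightarrow> 'a) \<Rightarrow> 'u set \<Rightarrow> 'a set \<Rightarrow> 'a \<Rightarrow> bool" where
  "equi_invariant_mean_point F U Q x \<longleftrightarrow> x \<in> Q \<and>
     (\<forall>\<epsilon>>0. \<exists>\<delta>>0. \<exists>w. (\<forall>i. w i \<in> U) \<and>
        (\<forall>n::nat. n \<ge> 1 \<longrightarrow> (\<forall>y \<in> ball x \<delta> \<inter> Q.
            (\<Sum>i<n. infdist (phi F i y w) Q) / real n < \<epsilon>)))"

definition equi_invariant :: "('u \<Rightarrow> 'a::metric_space \<Rightarrow> 'a) \<Rightarrow> 'u set \<Rightarrow> 'a set \<Rightarrow> bool" where
  "equi_invariant F U Q \<longleftrightarrow> (\<forall>x\<in>Q. equi_invariant_point F U Q x)"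

definition equi_invariant_mean :: "('u \<Rightarrow> 'a::metric_space \<Rightarrow> 'a) \<Rightarrow> 'u set \<Rightarrow> 'a set \<Rightarrow> bool" where
  "equi_invariant_mean F U Q \<longleftrightarrow> (\<forall>x\<in>Q. equi_invariant_mean_point F U Q x)"

text \<open>The concrete maps (only their values on [0,1] matter; trajectories from [0,1] stay in [0,1]).\<close>
definition F0 :: "real \<Rightarrow> real" where
  "F0 x = (if x < 3/8 then x
           else if x < 1/2 then 5 * (x - 1/2) + 1
           else if x < 5/8 then 1
           else if x < 3/4 then -5 * (x - 3/4) + 3/8
           else 3/8)"

definition F1 :: "real \<Rightarrow> real" where
  "F1 x = (if x < 1/4 then 1
           else if x < 3/8 then -4 * (x - 1/4) + 1
           else if x < 1/2 then 1/2
           else if x < 5/8 then 4 * (x - 5/8) + 1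
           else 1)"

definition F2 :: "real \<Rightarrow> real" where
  "F2 x = 1"

definition Fsys :: "nat \<Rightarrow> real \<Rightarrow> real" where
  "Fsys u = (if u = 0 then F0 else if u = 1 then F1 else F2)"

end

theory Submission
  imports Defs
begin

text \<open>On Q = [1/4,1/2] the map F0 fixes [1/4,3/8) pointwise and F1 sends [3/8,1/2] to 1/2,
so every point of Q except 3/8 has a neighbourhood that a constant control keeps inside Q.
No control works uniformly near 3/8. If it is constantly 0, points just right of 3/8 are
repelled by F0, which expands the distance to 3/8 by the factor 5. Otherwise points just left
of 3/8 are fixed until the first nonzero control, which sends them to 1 (F2) or just right of
1/2 (F1); there F1 expands the distance to 1/2 by the factor 4 while F0 and F2 send to 1.
Either way a trajectory from arbitrarily close to 3/8 reaches [5/8,1], at distance 1/8 from Q.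

In the mean, however, 3/8 is harmless: apply F0 for N steps (trajectories from within
1/(32 5^N) of 3/8 stay in Q), then F1, F0, F0, which brings every such trajectory through
[1/2,1] to 3/8, and then F1 forever. Only the two excursions to [1/2,1] leave Q, so the
average of the distances to Q up to time n is at most 1/n, and it vanishes for n \<le> N + 1.\<close>

lemma phi_add: "phi F (k + j) x w = phi F j (phi F k x w) (\<lambda>i. w (k + i))"
  by (induction j) auto

lemma phi_Suc_left: "phi F (Suc j) x w = phi F j (F (w 0) x) (\<lambda>i. w (Suc i))"
  by (induction j) auto

lemma infdist_atLeastAtMost_ge:
  fixes a b p :: real
  assumes "a \<le> b" "b \<le> p"
  shows "p - b \<le> infdist p {a..b}"
proof -
  have "infdist p {a..b} = (INF q\<in>{a..b}. dist p q)"
    using assms(1) by (intro infdist_notempty) auto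
  also have "p - b \<le> \<dots>"
    using assms by (intro cINF_greatest) (auto simp: dist_real_def)
  finally show ?thesis .
qed

lemma average_lt_if_sparse_support:
  fixes f :: "nat \<Rightarrow> real"
  assumes "finite S"
    and zero: "\<And>i. i \<notin> S \<Longrightarrow> f i = 0"
    and bound: "\<And>i. i \<in> S \<Longrightarrow> f i \<le> c"
    and late: "\<And>i. i \<in> S \<Longrightarrow> N < i"
    and "0 \<le> c" "real (card S) * c \<le> \<epsilon> * real N" "0 < \<epsilon>" "0 < n"
  shows "(\<Sum>i<n. f i) / real n < \<epsilon>"
proof -
  have sum_S: "(\<Sum>i<n. f i) = (\<Sum>i\<in>{..<n} \<inter> S. f i)"
    by (rule sum.mono_neutral_right) (auto intro: zero)
  show ?thesis
  proof (cases "n \<le> N")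
    case True
    then have "{..<n} \<inter> S = {}"
      using late by fastforce
    then show ?thesis
      using sum_S \<open>0 < \<epsilon>\<close> by simp
  next
    case False
    have "(\<Sum>i\<in>{..<n} \<inter> S. f i) \<le> real (card ({..<n} \<inter> S)) * c"
      using bound by (intro sum_bounded_above) auto
    also have "\<dots> \<le> real (card S) * c"
      using \<open>finite S\<close> \<open>0 \<le> c\<close> by (intro mult_right_mono) (auto intro: card_mono)
    also have "\<dots> < \<epsilon> * real n"
      using assms(6) False \<open>0 < \<epsilon>\<close> by (smt (verit) mult_strict_left_mono not_le of_nat_less_iff)
    finally show ?thesis
      using sum_S \<open>0 < n\<close> by (simp add: field_simps)
  qed
qed

lemma equi_invariant_mean_point_if_trapped:
  assumes "x \<in> Q" "0 < \<delta>" "\<And>i. w i \<in> U"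
    and trapped: "\<And>k y. y \<in> ball x \<delta> \<inter> Q \<Longrightarrow> phi F k y w \<in> Q"
  shows "equi_invariant_mean_point F U Q x"
  unfolding equi_invariant_mean_point_def
proof (intro conjI allI impI)
  fix \<epsilon> :: real
  assume "0 < \<epsilon>"
  have "(\<Sum>i<n. infdist (phi F i y w) Q) / real n < \<epsilon>" if "y \<in> ball x \<delta> \<inter> Q" for n y
    using trapped[OF that] \<open>0 < \<epsilon>\<close> by simp
  then show "\<exists>\<delta>>0. \<exists>w. (\<forall>i. w i \<in> U) \<and> (\<forall>n\<ge>1. \<forall>y\<in>ball x \<delta> \<inter> Q.
      (\<Sum>i<n. infdist (phi F i y w) Q) / real n < \<epsilon>)"
    using assms(2,3) by blast
qed (fact assms(1))

lemma Fsys_0 [simp]: "Fsys 0 = F0"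
  and Fsys_1 [simp]: "Fsys 1 = F1" "Fsys (Suc 0) = F1"
  by (simp_all add: Fsys_def)

lemma phi_F0_left_fixed:
  fixes y :: real
  assumes "\<forall>i<k. w i = 0" "1/4 \<le> y" "y < 3/8"
  shows "phi Fsys k y w = y"
  using assms by (induction k) (auto simp: F0_def)

lemma phi_F0_right_expands:
  fixes y :: real
  assumes "\<forall>i<k. w i = 0" "3/8 \<le> y" "5^k * (y - 3/8) \<le> 1/8"
  shows "phi Fsys k y w = 3/8 + 5^k * (y - 3/8)"
  using assms
proof (induction k)
  case (Suc k)
  have "5^k * (y - 3/8) \<le> 1/40"
    using Suc.prems(3) by simp
  moreover have "0 \<le> 5^k * (y - 3/8)"
    using Suc.prems(2) by simp
  ultimately have "F0 (3/8 + 5^k * (y - 3/8)) = 3/8 + 5^Suc k * (y - 3/8)"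
    by (simp add: F0_def algebra_simps)
  with Suc show ?case
    by simp
qed simp

lemma F1_eq_half: "3/8 \<le> v \<Longrightarrow> v \<le> 1/2 \<Longrightarrow> F1 v = 1/2"
  by (simp add: F1_def)

lemma phi_F1_right_trapped:
  fixes y :: real
  assumes "\<forall>i. w i = 1" "3/8 \<le> y" "y \<le> 1/2"
  shows "phi Fsys k y w \<in> {3/8..1/2}"
  using assms by (induction k) (auto simp: F1_eq_half)

lemma phi_F0_escapes:
  fixes t :: real
  assumes "0 < t" "5^m * t = 1/8"
  shows "\<exists>j. 5/8 \<le> phi Fsys j (3/8 + t) (\<lambda>_. 0)"
  using assms
proof (induction m arbitrary: t)
  case 0
  then have "phi Fsys 1 (3/8 + t) (\<lambda>_. 0) = 1"
    by (simp add: F0_def)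
  then show ?case
    by (intro exI[of _ 1]) simp
next
  case (Suc m)
  have "5^m * t = 1/40"
    using Suc.prems(2) by simp
  moreover have "t \<le> 5^m * t"
    using Suc.prems(1) by simp
  ultimately have "t \<le> 1/40"
    by simp
  then have "F0 (3/8 + t) = 3/8 + 5 * t"
    using Suc.prems(1) by (simp add: F0_def)
  moreover obtain j where "5/8 \<le> phi Fsys j (3/8 + 5 * t) (\<lambda>_. 0)"
    using Suc.IH[of "5 * t"] Suc.prems by (auto simp: mult.assoc)
  ultimately have "5/8 \<le> phi Fsys (Suc j) (3/8 + t) (\<lambda>_. 0)"
    by (simp only: phi_Suc_left Fsys_0)
  then show ?case ..
qed

lemma phi_F1_escapes:
  fixes t :: real
  assumes "0 < t" "4^m * t = 1/8"
  shows "\<exists>j. 5/8 \<le> phi Fsys j (1/2 + t) w"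
  using assms
proof (induction m arbitrary: t w)
  case 0
  then have "5/8 \<le> phi Fsys 0 (1/2 + t) w"
    by simp
  then show ?case ..
next
  case (Suc m)
  have "4^m * t = 1/32"
    using Suc.prems(2) by simp
  moreover have "t \<le> 4^m * t"
    using Suc.prems(1) by simp
  ultimately have "t \<le> 1/32"
    by simp
  then have range: "1/2 < 1/2 + t" "1/2 + t < 5/8"
    using Suc.prems(1) by linarith+
  show ?case
  proof (cases "w 0 = 1")
    case True
    have "Fsys (w 0) (1/2 + t) = 1/2 + 4 * t"
      using True range by (simp add: Fsys_def F1_def algebra_simps)
    moreover obtain j where "5/8 \<le> phi Fsys j (1/2 + 4 * t) (\<lambda>i. w (Suc i))"
      using Suc.IH[of "4 * t"] Suc.prems by (auto simp: mult.assoc)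
    ultimately have "5/8 \<le> phi Fsys (Suc j) (1/2 + t) w"
      by (simp only: phi_Suc_left)
    then show ?thesis ..
  next
    case False
    then have "phi Fsys 1 (1/2 + t) w = 1"
      using range by (auto simp: Fsys_def F0_def F2_def)
    then show ?thesis
      by (intro exI[of _ 1]) simp
  qed
qed

lemma escapes_near_three_eighths:
  assumes "0 < \<delta>"
  shows "\<exists>y \<in> ball (3/8) \<delta> \<inter> {1/4..1/2::real}. \<exists>k. 5/8 \<le> phi Fsys k y w"
proof (cases "\<forall>i. w i = 0")
  case True
  then have w: "w = (\<lambda>_. 0)"
    by auto
  obtain m where "1/(8*\<delta>) < 5^m"
    using real_arch_pow[of 5] by auto
  define t :: real where "t = 1/(8*5^m)"
  have t: "0 < t" "5^m * t = 1/8" "t < \<delta>" "t \<le> 1/8"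
    using \<open>1/(8*\<delta>) < 5^m\<close> assms by (auto simp: t_def field_simps)
  then have "3/8 + t \<in> ball (3/8) \<delta> \<inter> {1/4..1/2}"
    by (auto simp: dist_real_def)
  with phi_F0_escapes[OF t(1,2)] w show ?thesis
    by blast
next
  case False
  define k where "k = (LEAST i. w i \<noteq> 0)"
  have "w k \<noteq> 0"
    using False unfolding k_def by (metis (mono_tags) LeastI_ex)
  have "\<forall>i<k. w i = 0"
    unfolding k_def using not_less_Least by blast
  obtain m where "1/(32*\<delta>) < 4^m"
    using real_arch_pow[of 4] by auto
  define t :: real where "t = 1/(8*4^Suc m)"
  have t: "0 < t" "4^m * (4 * t) = 1/8" "t < \<delta>" "t \<le> 1/32"
    using \<open>1/(32*\<delta>) < 4^m\<close> assms by (auto simp: t_def field_simps)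
  define y where "y = 3/8 - t"
  have y: "y \<in> ball (3/8) \<delta> \<inter> {1/4..1/2}" "1/4 \<le> y" "y < 3/8"
    using t by (auto simp: y_def dist_real_def)
  have "phi Fsys (Suc k) y w = Fsys (w k) y"
    using phi_F0_left_fixed[OF \<open>\<forall>i<k. w i = 0\<close> y(2,3)] by simp
  moreover have "\<exists>j. 5/8 \<le> phi Fsys j (Fsys (w k) y) (\<lambda>i. w (Suc k + i))"
  proof (cases "w k = 1")
    case True
    have "Fsys (w k) y = 1/2 + 4 * t"
      using True y by (simp add: Fsys_def F1_def y_def algebra_simps)
    with phi_F1_escapes[of "4 * t"] t show ?thesis
      by simp
  next
    case False
    with \<open>w k \<noteq> 0\<close> have "Fsys (w k) y = 1"
      by (simp add: Fsys_def F2_def)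
    then show ?thesis
      by (intro exI[of _ 0]) simp
  qed
  ultimately obtain j where "5/8 \<le> phi Fsys (Suc k + j) y w"
    by (auto simp only: phi_add)
  with y show ?thesis
    by blast
qed

lemma not_equi_invariant_point_three_eighths:
  "\<not> equi_invariant_point Fsys U {1/4..1/2::real} (3/8)"
proof
  assume "equi_invariant_point Fsys U {1/4..1/2::real} (3/8)"
  then obtain \<delta> w where "0 < \<delta>" and near:
      "\<forall>k. \<forall>y \<in> ball (3/8) \<delta> \<inter> {1/4..1/2}. infdist (phi Fsys k y w) {1/4..1/2::real} < 1/8"
    unfolding equi_invariant_point_def by (meson zero_less_divide_1_iff zero_less_numeral)
  obtain y k where "y \<in> ball (3/8) \<delta> \<inter> {1/4..1/2}" "5/8 \<le> phi Fsys k y w"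
    using escapes_near_three_eighths[OF \<open>0 < \<delta>\<close>] by blast
  moreover from this(2) have "1/8 \<le> infdist (phi Fsys k y w) {1/4..1/2}"
    using infdist_atLeastAtMost_ge[of "1/4" "1/2" "phi Fsys k y w"] by simp
  ultimately show False
    using near by (meson not_le)
qed

lemma phi_F0_wait_near_three_eighths:
  fixes y :: real
  assumes "\<forall>j<i. w j = 0" "5^i * \<bar>y - 3/8\<bar> < 1/32" "1/4 \<le> y" "y \<le> 1/2"
  shows "phi Fsys i y w \<in> {1/4..1/2}" "F1 (phi Fsys i y w) \<in> {1/2..<5/8}"
proof -
  have "phi Fsys i y w \<in> {1/4..1/2} \<and> F1 (phi Fsys i y w) \<in> {1/2..<5/8}"
  proof (cases "y < 3/8")
    case True
    have "\<bar>y - 3/8\<bar> \<le> 5^i * \<bar>y - 3/8\<bar>"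
      using mult_right_mono[of 1 "5^i" "\<bar>y - 3/8\<bar>"] by simp
    with assms(2) True have "3/8 - y < 1/32"
      by linarith
    moreover have "phi Fsys i y w = y"
      using phi_F0_left_fixed assms(1,3) True by blast
    ultimately show ?thesis
      using True assms(3) by (auto simp: F1_def)
  next
    case False
    then have "0 \<le> 5^i * (y - 3/8)" "5^i * (y - 3/8) \<le> 1/32"
      using assms(2) by simp_all
    moreover from this have "phi Fsys i y w = 3/8 + 5^i * (y - 3/8)"
      using phi_F0_right_expands assms(1) False by simp
    ultimately have "3/8 \<le> phi Fsys i y w" "phi Fsys i y w \<le> 1/2"
      by linarith+
    then show ?thesis
      by (simp add: F1_eq_half)
  qed
  then show "phi Fsys i y w \<in> {1/4..1/2}" "F1 (phi Fsys i y w) \<in> {1/2..<5/8}"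
    by blast+
qed

definition mean_control :: "nat \<Rightarrow> nat \<Rightarrow> nat" where
  "mean_control N i = (if i = N \<or> Suc (Suc N) < i then 1 else 0)"

lemma phi_mean_control:
  fixes y :: real
  assumes close: "\<bar>y - 3/8\<bar> < 1/(32*5^N)" and y: "1/4 \<le> y" "y \<le> 1/2"
  shows phi_mean_control_in: "i \<notin> {Suc N, Suc (Suc N)} \<Longrightarrow> phi Fsys i y (mean_control N) \<in> {1/4..1/2}"
    and phi_mean_control_out: "i \<in> {Suc N, Suc (Suc N)} \<Longrightarrow> phi Fsys i y (mean_control N) \<in> {1/2..1}"
proof -
  let ?w = "mean_control N"
  have waiting: "phi Fsys i y ?w \<in> {1/4..1/2}" "F1 (phi Fsys i y ?w) \<in> {1/2..<5/8}"
    if "i \<le> N" for i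
  proof -
    have "5^i * \<bar>y - 3/8\<bar> \<le> 5^N * \<bar>y - 3/8\<bar>"
      using that by (intro mult_right_mono power_increasing) auto
    also have "\<dots> < 1/32"
      using close by (simp add: field_simps)
    finally have "5^i * \<bar>y - 3/8\<bar> < 1/32" .
    moreover have "\<forall>j<i. ?w j = 0"
      using that by (simp add: mean_control_def)
    ultimately show "phi Fsys i y ?w \<in> {1/4..1/2}" "F1 (phi Fsys i y ?w) \<in> {1/2..<5/8}"
      using phi_F0_wait_near_three_eighths y by blast+
  qed
  have "phi Fsys (Suc N) y ?w = F1 (phi Fsys N y ?w)"
    by (simp add: mean_control_def)
  with waiting(2)[of N] have first_out: "phi Fsys (Suc N) y ?w \<in> {1/2..<5/8}"
    by simp
  then have second_out: "phi Fsys (Suc (Suc N)) y ?w = 1"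
    by (simp add: mean_control_def F0_def)
  have after: "phi Fsys i y ?w \<in> {3/8..1/2}" if late: "Suc (Suc (Suc N)) \<le> i" for i
  proof -
    obtain j where i: "i = Suc (Suc (Suc N)) + j"
      using le_Suc_ex[OF late] by blast
    have "phi Fsys (Suc (Suc (Suc N))) y ?w = 3/8"
      using second_out by (simp add: mean_control_def F0_def)
    then show ?thesis
      unfolding i phi_add by (intro phi_F1_right_trapped) (auto simp: mean_control_def)
  qed
  show "phi Fsys i y ?w \<in> {1/4..1/2}" if "i \<notin> {Suc N, Suc (Suc N)}"
  proof (cases "i \<le> N")
    case False
    with that have "Suc (Suc (Suc N)) \<le> i"
      by auto
    with after show ?thesis
      by fastforce
  qed (fact waiting(1))
  show "phi Fsys i y ?w \<in> {1/2..1}" if "i \<in> {Suc N, Suc (Suc N)}"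
    using that first_out second_out by auto
qed

lemma equi_invariant_mean_point_three_eighths:
  "equi_invariant_mean_point Fsys {0,1,2} {1/4..1/2::real} (3/8)"
  unfolding equi_invariant_mean_point_def
proof (intro conjI allI impI)
  fix \<epsilon> :: real
  assume "0 < \<epsilon>"
  define N where "N = nat \<lceil>1/\<epsilon>\<rceil>"
  have "1/\<epsilon> \<le> real N"
    unfolding N_def by (rule real_nat_ceiling_ge)
  then have "1 \<le> \<epsilon> * real N"
    using \<open>0 < \<epsilon>\<close> by (simp add: field_simps)
  have "(\<Sum>i<n. infdist (phi Fsys i y (mean_control N)) {1/4..1/2}) / real n < \<epsilon>"
    if "1 \<le> n" and y: "y \<in> ball (3/8) (1/(32*5^N)) \<inter> {1/4..1/2}" for n y
  proof (rule average_lt_if_sparse_support[where S = "{Suc N, Suc (Suc N)}" and c = "1/2" and N = N])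
    have close: "\<bar>y - 3/8\<bar> < 1/(32*5^N)"
      using y by (auto simp: dist_real_def)
    show "infdist (phi Fsys i y (mean_control N)) {1/4..1/2} = 0"
      if "i \<notin> {Suc N, Suc (Suc N)}" for i
      using phi_mean_control_in[OF close _ _ that] y by auto
    show "infdist (phi Fsys i y (mean_control N)) {1/4..1/2} \<le> 1/2"
      if "i \<in> {Suc N, Suc (Suc N)}" for i
      using phi_mean_control_out[OF close _ _ that] y
      by (intro infdist_le2[of "1/2"]) (auto simp: dist_real_def)
  qed (use \<open>0 < \<epsilon>\<close> \<open>1 \<le> \<epsilon> * real N\<close> \<open>1 \<le> n\<close> in auto)
  moreover have "\<forall>i. mean_control N i \<in> {0,1,2}"
    by (simp add: mean_control_def)
  moreover have "0 < 1/(32*5^N::real)"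
    by simp
  ultimately show "\<exists>\<delta>>0. \<exists>w. (\<forall>i. w i \<in> {0,1,2}) \<and> (\<forall>n\<ge>1. \<forall>y\<in>ball (3/8) \<delta> \<inter> {1/4..1/2}.
      (\<Sum>i<n. infdist (phi Fsys i y w) {1/4..1/2}) / real n < \<epsilon>)"
    by blast
qed simp

lemma equi_invariant_mean_point_off_three_eighths:
  assumes x: "x \<in> {1/4..1/2::real}" "x \<noteq> 3/8"
  shows "equi_invariant_mean_point Fsys {0,1,2} {1/4..1/2} x"
proof (cases "x < 3/8")
  case True
  show ?thesis
  proof (rule equi_invariant_mean_point_if_trapped[where \<delta> = "3/8 - x" and w = "\<lambda>_. 0"])
    show "phi Fsys k y (\<lambda>_. 0) \<in> {1/4..1/2}" if "y \<in> ball x (3/8 - x) \<inter> {1/4..1/2}" for k y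
      using that phi_F0_left_fixed[of k "\<lambda>_. 0" y] by (auto simp: dist_real_def)
  qed (use x True in auto)
next
  case False
  show ?thesis
  proof (rule equi_invariant_mean_point_if_trapped[where \<delta> = "x - 3/8" and w = "\<lambda>_. 1"])
    show "phi Fsys k y (\<lambda>_. 1) \<in> {1/4..1/2}" if "y \<in> ball x (x - 3/8) \<inter> {1/4..1/2}" for k y
    proof -
      have "3/8 \<le> y" "y \<le> 1/2"
        using that by (auto simp: dist_real_def)
      then show ?thesis
        using phi_F1_right_trapped[of "\<lambda>_. 1" y k] by auto
    qed
  qed (use x False in auto)
qed

theorem mainTheorem14:
  shows "equi_invariant_mean Fsys {0,1,2} {1/4..1/2}
       \<and> \<not> equi_invariant Fsys {0,1,2} {1/4..1/2}"
proof
  show "equi_invariant_mean Fsys {0,1,2} {1/4..1/2}"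
    unfolding equi_invariant_mean_def
    using equi_invariant_mean_point_three_eighths equi_invariant_mean_point_off_three_eighths
    by blast
  show "\<not> equi_invariant Fsys {0,1,2} {1/4..1/2}"
    unfolding equi_invariant_def
    using not_equi_invariant_point_three_eighths[of "{0,1,2}"] by fastforce
qed

end
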